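(* Let $u\in A$ be such that $|\dot u(t)|\neq0$ for almost every $t\in[0,1]$. Then there exists a reparametrisation $v\in A$ of $u$ such that $\mathcal L(v)^2=2\mathcal M(v)$.
   Context: Let $\Omega\subset\mathbb{R}^n$, $p_0,p_1\in\Omega$, and $A=\{u\in H^1([0,1],\Omega): u(0)=p_0,\ u(1)=p_1\}$. Let $V:\Omega\to\mathbb{R}$ be continuous and strictly positive. $\mathcal M(u)=\frac12\int_0^1|\dot u(t)|^2dt\int_0^1V(u(t))\,dt$ and $\mathcal L(u)=\int_0^1|\dot u(t)|\sqrt{V(u(t))}\,dt$. *)

theory Defs
  imports "HOL-Analysis.Analysis"
begin

text \<open>H^1([0,1],Omega): absolutely continuous paths with square-integrable derivative,
  i.e. u(t) = u(0) + integral of g over [0,t] with g in L^2(0,1).\<close>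
definition H1_path :: "'a::euclidean_space set \<Rightarrow> (real \<Rightarrow> 'a) \<Rightarrow> bool" where
  "H1_path \<Omega> u \<longleftrightarrow>
     (\<forall>t\<in>{0..1}. u t \<in> \<Omega>) \<and>
     (\<exists>g. g integrable_on {0..1} \<and> (\<lambda>t. (norm (g t))\<^sup>2) integrable_on {0..1} \<and>
          (\<forall>t\<in>{0..1}. u t = u 0 + integral {0..t} g))"

definition admissible :: "'a::euclidean_space set \<Rightarrow> 'a \<Rightarrow> 'a \<Rightarrow> (real \<Rightarrow> 'a) \<Rightarrow> bool" where
  "admissible \<Omega> p0 p1 u \<longleftrightarrow> H1_path \<Omega> u \<and> u 0 = p0 \<and> u 1 = p1"

text \<open>Derivative of a path (defined almost everywhere for H^1 paths).\<close>
definition dot :: "(real \<Rightarrow> 'a::euclidean_space) \<Rightarrow> real \<Rightarrow> 'a" where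
  "dot u t = vector_derivative u (at t)"

definition Mfun :: "('a::euclidean_space \<Rightarrow> real) \<Rightarrow> (real \<Rightarrow> 'a) \<Rightarrow> real" where
  "Mfun V u = (1/2) * integral {0..1} (\<lambda>t. (norm (dot u t))\<^sup>2) * integral {0..1} (\<lambda>t. V (u t))"

definition Lfun :: "('a::euclidean_space \<Rightarrow> real) \<Rightarrow> (real \<Rightarrow> 'a) \<Rightarrow> real" where
  "Lfun V u = integral {0..1} (\<lambda>t. norm (dot u t) * sqrt (V (u t)))"

definition reparam :: "(real \<Rightarrow> 'a) \<Rightarrow> (real \<Rightarrow> 'a) \<Rightarrow> bool" where
  "reparam v u \<longleftrightarrow> (\<exists>\<phi>::real \<Rightarrow> real. continuous_on {0..1} \<phi> \<and> strict_mono_on {0..1} \<phi> \<and>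
      \<phi> 0 = 0 \<and> \<phi> 1 = 1 \<and> (\<forall>t\<in>{0..1}. v t = u (\<phi> t)))"

end

(*
  Let g be the derivative of u and rho = V o u. Since g is nonzero almost everywhere, the
  normalised weighted arc length sigma r = (1/c) * integral {0..r} (|g| / sqrt rho), with c
  chosen so that sigma 1 = 1, is a strictly increasing, absolutely continuous map of [0,1] onto
  itself; let phi be its inverse. By Lebesgue's differentiation theorem sigma' = |g| / (c sqrt rho)
  almost everywhere, and the change of variables formula for sigma shows that v = u o phi is again
  an H^1 path whose velocity w satisfies |w| = c * sqrt (V o v). For a path of such constant
  weighted speed both L v and 2 M v are computed from I = integral {0..1} (V o v): L v = c * I
  and 2 * M v = c^2 * I * I, hence (L v)^2 = 2 * M v.
*)

theory Submission
  imports Defs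
begin

lemma Lebesgue_points_right_real:
  fixes f :: "real \<Rightarrow> 'b::euclidean_space"
  assumes "\<And>a b. f integrable_on {a..b}"
  obtains N where "negligible N"
    "\<And>x e. x \<notin> N \<Longrightarrow> 0 < e \<Longrightarrow> \<exists>d>0. \<forall>y. x < y \<and> y < x + d \<longrightarrow>
        norm (integral {x..y} f - (y - x) *\<^sub>R f x) \<le> e * (y - x)"
proof -
  obtain N where "negligible N" and N: "\<And>x e. x \<notin> N \<Longrightarrow> 0 < e \<Longrightarrow>
      \<exists>d>0. \<forall>h. 0 < h \<and> h < d \<longrightarrow> norm (integral {x..x + h} f /\<^sub>R h - f x) < e"
    using integrable_ccontinuous_explicit[of f] assms by auto
  show thesis
  proof (rule that[OF \<open>negligible N\<close>])
    fix x e :: real assume "x \<notin> N" "0 < e"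
    then obtain d where "d > 0"
      and d: "\<And>h. 0 < h \<Longrightarrow> h < d \<Longrightarrow> norm (integral {x..x + h} f /\<^sub>R h - f x) < e"
      using N[OF \<open>x \<notin> N\<close> \<open>0 < e\<close>] by blast
    have "norm (integral {x..y} f - (y - x) *\<^sub>R f x) \<le> e * (y - x)" if "x < y" "y < x + d" for y
    proof -
      have "integral {x..y} f - (y - x) *\<^sub>R f x
          = (y - x) *\<^sub>R (integral {x..x + (y - x)} f /\<^sub>R (y - x) - f x)"
        using that by (simp add: scaleR_right_diff_distrib)
      then show ?thesis
        using d[of "y - x"] that by (simp add: mult.commute)
    qed
    then show "\<exists>d>0. \<forall>y. x < y \<and> y < x + d \<longrightarrow>
        norm (integral {x..y} f - (y - x) *\<^sub>R f x) \<le> e * (y - x)"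
      using \<open>d > 0\<close> by blast
  qed
qed

lemma Lebesgue_points_real:
  fixes f :: "real \<Rightarrow> 'b::euclidean_space"
  assumes "\<And>a b. f integrable_on {a..b}"
  obtains N where "negligible N"
    "\<And>x e. x \<notin> N \<Longrightarrow> 0 < e \<Longrightarrow> \<exists>d>0. \<forall>y. x < y \<and> y < x + d \<longrightarrow>
        norm (integral {x..y} f - (y - x) *\<^sub>R f x) \<le> e * (y - x)"
    "\<And>x e. x \<notin> N \<Longrightarrow> 0 < e \<Longrightarrow> \<exists>d>0. \<forall>y. x - d < y \<and> y < x \<longrightarrow>
        norm (integral {y..x} f - (x - y) *\<^sub>R f x) \<le> e * (x - y)"
proof -
  obtain N1 where "negligible N1" and N1: "\<And>x e. x \<notin> N1 \<Longrightarrow> 0 < e \<Longrightarrow> \<exists>d>0. \<forall>y. x < y \<and> y < x + d \<longrightarrow>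
        norm (integral {x..y} f - (y - x) *\<^sub>R f x) \<le> e * (y - x)"
    using Lebesgue_points_right_real assms by blast
  \<comment> \<open>Left Lebesgue points of \<open>f\<close> are right Lebesgue points of \<open>\<lambda>x. f (- x)\<close>.\<close>
  have "(\<lambda>x. f (- x)) integrable_on {a..b}" for a b
    using assms[of "-b" "-a"]
      Henstock_Kurzweil_Integration.integrable_reflect_real[where f=f and a="-b" and b="-a"]
    by simp
  then obtain N2 where "negligible N2" and N2: "\<And>x e. x \<notin> N2 \<Longrightarrow> 0 < e \<Longrightarrow> \<exists>d>0. \<forall>y. x < y \<and> y < x + d \<longrightarrow>
        norm (integral {x..y} (\<lambda>x. f (- x)) - (y - x) *\<^sub>R f (- x)) \<le> e * (y - x)"
    using Lebesgue_points_right_real by blast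
  have "negligible (uminus ` N2)"
    by (rule negligible_differentiable_image_negligible)
      (auto intro: \<open>negligible N2\<close> derivative_intros)
  show thesis
  proof (rule that[of "N1 \<union> uminus ` N2"])
    show "negligible (N1 \<union> uminus ` N2)"
      using \<open>negligible N1\<close> \<open>negligible (uminus ` N2)\<close> by simp
  next
    fix x e :: real assume "x \<notin> N1 \<union> uminus ` N2" "0 < e"
    then show "\<exists>d>0. \<forall>y. x < y \<and> y < x + d \<longrightarrow>
        norm (integral {x..y} f - (y - x) *\<^sub>R f x) \<le> e * (y - x)"
      using N1 by blast
    from \<open>x \<notin> N1 \<union> uminus ` N2\<close> have "- x \<notin> N2"
      by (auto simp: image_iff)
    then obtain d where "d > 0" and d: "\<forall>y. - x < y \<and> y < - x + d \<longrightarrow>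
        norm (integral {- x..y} (\<lambda>x. f (- x)) - (y - (- x)) *\<^sub>R f (- (- x))) \<le> e * (y - (- x))"
      using N2 \<open>0 < e\<close> by blast
    have "norm (integral {y..x} f - (x - y) *\<^sub>R f x) \<le> e * (x - y)" if "x - d < y" "y < x" for y
      using d[rule_format, of "- y"] that
        Henstock_Kurzweil_Integration.integral_reflect_real[where f=f and a=y and b=x]
      by simp
    with \<open>d > 0\<close> show "\<exists>d>0. \<forall>y. x - d < y \<and> y < x \<longrightarrow>
        norm (integral {y..x} f - (x - y) *\<^sub>R f x) \<le> e * (x - y)"
      by blast
  qed
qed

lemma locally_integrable_indefinite_integral_has_vector_derivative_ae:
  fixes f :: "real \<Rightarrow> 'b::euclidean_space"
  assumes f: "\<And>a b. f integrable_on {a..b}"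
  obtains N where "negligible N"
    "\<And>x. c < x \<Longrightarrow> x \<notin> N \<Longrightarrow> ((\<lambda>t. integral {c..t} f) has_vector_derivative f x) (at x)"
proof -
  obtain N where "negligible N"
    and right: "\<And>x e. x \<notin> N \<Longrightarrow> 0 < e \<Longrightarrow> \<exists>d>0. \<forall>y. x < y \<and> y < x + d \<longrightarrow>
        norm (integral {x..y} f - (y - x) *\<^sub>R f x) \<le> e * (y - x)"
    and left: "\<And>x e. x \<notin> N \<Longrightarrow> 0 < e \<Longrightarrow> \<exists>d>0. \<forall>y. x - d < y \<and> y < x \<longrightarrow>
        norm (integral {y..x} f - (x - y) *\<^sub>R f x) \<le> e * (x - y)"
    using Lebesgue_points_real[OF f] by blast
  let ?F = "\<lambda>t. integral {c..t} f"
  have F_diff: "?F z - ?F y = integral {y..z} f" if "c \<le> y" "y \<le> z" for y z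
    using that Henstock_Kurzweil_Integration.integral_combine[OF _ _ f, of c y z]
    by (simp add: algebra_simps)
  show thesis
  proof (rule that[OF \<open>negligible N\<close>])
    fix x assume "c < x" "x \<notin> N"
    show "(?F has_vector_derivative f x) (at x)"
      unfolding has_vector_derivative_def has_derivative_at_alt
    proof (intro conjI allI impI bounded_linear_scaleR_left)
      fix e :: real assume "0 < e"
      obtain d1 where "0 < d1" and d1: "\<forall>y. x < y \<and> y < x + d1 \<longrightarrow>
          norm (integral {x..y} f - (y - x) *\<^sub>R f x) \<le> e * (y - x)"
        using right[OF \<open>x \<notin> N\<close> \<open>0 < e\<close>] by blast
      obtain d2 where "0 < d2" and d2: "\<forall>y. x - d2 < y \<and> y < x \<longrightarrow>
          norm (integral {y..x} f - (x - y) *\<^sub>R f x) \<le> e * (x - y)"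
        using left[OF \<open>x \<notin> N\<close> \<open>0 < e\<close>] by blast
      define d where "d = min (min d1 d2) (x - c)"
      have "0 < d"
        using \<open>c < x\<close> \<open>0 < d1\<close> \<open>0 < d2\<close> by (simp add: d_def)
      moreover have "norm (?F y - ?F x - (y - x) *\<^sub>R f x) \<le> e * norm (y - x)"
        if "norm (y - x) < d" for y
      proof (cases "x \<le> y")
        case True
        then show ?thesis
          using that d1 F_diff[of x y] \<open>c < x\<close> by (cases "x = y") (auto simp: d_def)
      next
        case False
        have "?F y - ?F x - (y - x) *\<^sub>R f x = - (integral {y..x} f - (x - y) *\<^sub>R f x)"
          using F_diff[of y x] False that by (auto simp: d_def algebra_simps)
        then show ?thesis
          using that d2 False by (auto simp: d_def norm_minus_commute)
      qed
      ultimately show "\<exists>d>0. \<forall>y. norm (y - x) < d \<longrightarrow>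
          norm (?F y - ?F x - (y - x) *\<^sub>R f x) \<le> e * norm (y - x)"
        by blast
    qed
  qed
qed

lemma indefinite_integral_has_vector_derivative_ae:
  fixes f :: "real \<Rightarrow> 'b::euclidean_space"
  assumes f: "f integrable_on {a..b}"
  obtains N where "negligible N"
    "\<And>x. x \<in> {a<..<b} - N \<Longrightarrow> ((\<lambda>t. integral {a..t} f) has_vector_derivative f x) (at x)"
proof -
  define f0 where "f0 x = (if x \<in> {a..b} then f x else 0)" for x
  have "f0 integrable_on UNIV"
    unfolding f0_def using f integrable_restrict_UNIV by blast
  then have "f0 integrable_on {c..d}" for c d
    using integrable_on_subinterval by blast
  then obtain N where "negligible N"
    and N: "\<And>x. a < x \<Longrightarrow> x \<notin> N \<Longrightarrow> ((\<lambda>t. integral {a..t} f0) has_vector_derivative f0 x) (at x)"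
    using locally_integrable_indefinite_integral_has_vector_derivative_ae by blast
  show thesis
  proof (rule that[OF \<open>negligible N\<close>])
    fix x assume x: "x \<in> {a<..<b} - N"
    then have "((\<lambda>t. integral {a..t} f0) has_vector_derivative f x) (at x)"
      using N[of x] by (simp add: f0_def)
    then show "((\<lambda>t. integral {a..t} f) has_vector_derivative f x) (at x)"
      by (rule has_vector_derivative_transform_within_open[where S="{a<..<b}"])
        (use x in \<open>auto simp: f0_def intro!: integral_cong\<close>)
  qed
qed

lemma dot_eq_ae_if_indefinite_integral:
  fixes f :: "real \<Rightarrow> 'b::euclidean_space"
  assumes f: "f integrable_on {a..b}" and y: "\<And>t. t \<in> {a..b} \<Longrightarrow> y t = c + integral {a..t} f"
  obtains N where "negligible N" "\<And>t. t \<in> {a..b} - N \<Longrightarrow> dot y t = f t"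
proof -
  obtain N where "negligible N"
    and N: "\<And>t. t \<in> {a<..<b} - N \<Longrightarrow> ((\<lambda>s. integral {a..s} f) has_vector_derivative f t) (at t)"
    using indefinite_integral_has_vector_derivative_ae[OF f] by blast
  show thesis
  proof (rule that[of "N \<union> {a, b}"])
    show "negligible (N \<union> {a, b})"
      using \<open>negligible N\<close> by simp
    fix t assume "t \<in> {a..b} - (N \<union> {a, b})"
    then have t: "t \<in> {a<..<b} - N"
      by auto
    have "((\<lambda>s. c + integral {a..s} f) has_vector_derivative f t) (at t)"
      using N[OF t] by (auto intro!: derivative_eq_intros)
    then have "(y has_vector_derivative f t) (at t)"
      by (rule has_vector_derivative_transform_within_open[of _ _ _ "{a<..<b}"]) (use t y in auto)
    then show "dot y t = f t"
      unfolding dot_def by (rule vector_derivative_at)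
  qed
qed

lemma integral_pos_if_pos_ae:
  fixes f :: "real \<Rightarrow> real"
  assumes f: "f integrable_on {a..b}" and "a < b"
    and nonneg: "\<And>x. x \<in> {a..b} \<Longrightarrow> 0 \<le> f x"
    and "negligible Z" and pos: "\<And>x. x \<in> {a..b} - Z \<Longrightarrow> 0 < f x"
  shows "0 < integral {a..b} f"
proof (rule ccontr)
  assume "\<not> 0 < integral {a..b} f"
  then have F0: "integral {a..t} f = 0" if "t \<in> {a..b}" for t
  proof -
    have "f integrable_on {a..t}"
      using integrable_on_subinterval[OF f] that by auto
    then have "0 \<le> integral {a..t} f" and "integral {a..t} f \<le> integral {a..b} f"
      using that nonneg f by (auto intro!: integral_nonneg integral_subset_le)
    with \<open>\<not> 0 < integral {a..b} f\<close> show ?thesis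
      by linarith
  qed
  obtain N where "negligible N"
    and N: "\<And>x. x \<in> {a<..<b} - N \<Longrightarrow> ((\<lambda>t. integral {a..t} f) has_vector_derivative f x) (at x)"
    using indefinite_integral_has_vector_derivative_ae[OF f] by blast
  have "{a<..<b} \<subseteq> N \<union> Z"
  proof
    fix x assume x: "x \<in> {a<..<b}"
    show "x \<in> N \<union> Z"
    proof (rule ccontr)
      assume "x \<notin> N \<union> Z"
      with x have "((\<lambda>t. integral {a..t} f) has_vector_derivative f x) (at x)" and "0 < f x"
        using N[of x] pos[of x] by auto
      moreover have "((\<lambda>t. integral {a..t} f) has_vector_derivative 0) (at x)"
        by (rule has_vector_derivative_transform_within_open[OF has_vector_derivative_const,
              where S="{a<..<b}"])
          (use x F0 in auto)
      ultimately show False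
        using vector_derivative_unique_at by force
    qed
  qed
  then have "negligible {a<..<b}"
    by (rule negligible_subset[rotated]) (simp add: \<open>negligible N\<close> \<open>negligible Z\<close>)
  with \<open>a < b\<close> show False
    using negligible_interval(2)[of a b] by simp
qed

lemma strict_mono_on_indefinite_integral:
  fixes f :: "real \<Rightarrow> real"
  assumes f: "f integrable_on {a..b}"
    and nonneg: "\<And>x. x \<in> {a..b} \<Longrightarrow> 0 \<le> f x"
    and "negligible Z" and pos: "\<And>x. x \<in> {a..b} - Z \<Longrightarrow> 0 < f x"
  shows "strict_mono_on {a..b} (\<lambda>x. integral {a..x} f)"
proof (rule strict_mono_onI)
  fix x y assume "x \<in> {a..b}" "y \<in> {a..b}" "x < y"
  then have "integral {a..x} f + integral {x..y} f = integral {a..y} f"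
    using integrable_on_subinterval[OF f, of a y]
    by (intro Henstock_Kurzweil_Integration.integral_combine) auto
  moreover have "0 < integral {x..y} f"
    using \<open>x \<in> {a..b}\<close> \<open>y \<in> {a..b}\<close> integrable_on_subinterval[OF f, of x y]
    by (intro integral_pos_if_pos_ae[OF _ \<open>x < y\<close> _ \<open>negligible Z\<close>] nonneg pos) auto
  ultimately show "integral {a..x} f < integral {a..y} f"
    by linarith
qed

lemma continuous_strict_mono_on_inverse_real:
  fixes \<sigma> :: "real \<Rightarrow> real"
  assumes cont: "continuous_on {a..b} \<sigma>" and mono: "strict_mono_on {a..b} \<sigma>" and "a \<le> b"
  obtains \<phi> where "continuous_on {\<sigma> a..\<sigma> b} \<phi>" "strict_mono_on {\<sigma> a..\<sigma> b} \<phi>"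
    "\<And>x. x \<in> {a..b} \<Longrightarrow> \<phi> (\<sigma> x) = x"
    "\<And>y. y \<in> {\<sigma> a..\<sigma> b} \<Longrightarrow> \<phi> y \<in> {a..b} \<and> \<sigma> (\<phi> y) = y"
proof -
  have "\<sigma> ` {a..b} = {\<sigma> a..\<sigma> b}"
  proof
    show "\<sigma> ` {a..b} \<subseteq> {\<sigma> a..\<sigma> b}"
      using strict_mono_on_leD[OF mono] by auto
    show "{\<sigma> a..\<sigma> b} \<subseteq> \<sigma> ` {a..b}"
      using IVT'[of \<sigma> a _ b] cont \<open>a \<le> b\<close> by force
  qed
  then obtain \<phi> where hom: "homeomorphism {a..b} {\<sigma> a..\<sigma> b} \<sigma> \<phi>"
    using homeomorphism_compact[OF compact_Icc cont _ strict_mono_on_imp_inj_on[OF mono]] by blast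
  show thesis
  proof (rule that)
    show "continuous_on {\<sigma> a..\<sigma> b} \<phi>"
      using hom by (rule homeomorphism_cont2)
    show \<phi>\<sigma>: "\<phi> (\<sigma> x) = x" if "x \<in> {a..b}" for x
      using hom that by (simp add: homeomorphism_def)
    show \<sigma>\<phi>: "\<phi> y \<in> {a..b} \<and> \<sigma> (\<phi> y) = y" if "y \<in> {\<sigma> a..\<sigma> b}" for y
      using hom that by (auto simp: homeomorphism_def)
    show "strict_mono_on {\<sigma> a..\<sigma> b} \<phi>"
    proof (rule strict_mono_onI)
      fix y z assume "y \<in> {\<sigma> a..\<sigma> b}" "z \<in> {\<sigma> a..\<sigma> b}" "y < z"
      with \<sigma>\<phi> show "\<phi> y < \<phi> z"
        by (metis not_le strict_mono_on_leD[OF mono])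
    qed
  qed
qed

lemma indefinite_integral_inverse:
  fixes s :: "real \<Rightarrow> real"
  assumes s: "s integrable_on {0..1}" and nonneg: "\<And>x. x \<in> {0..1} \<Longrightarrow> 0 \<le> s x"
    and "negligible Z" and pos: "\<And>x. x \<in> {0..1} - Z \<Longrightarrow> 0 < s x"
    and total: "integral {0..1} s = 1"
  obtains \<phi> where "continuous_on {0..1} \<phi>" "strict_mono_on {0..1} \<phi>" "\<phi> 0 = 0" "\<phi> 1 = 1"
    "\<And>t. t \<in> {0..1} \<Longrightarrow> \<phi> t \<in> {0..1} \<and> integral {0..\<phi> t} s = t"
    "\<And>r. r \<in> {0..1} \<Longrightarrow> \<phi> (integral {0..r} s) = r"
proof -
  define \<sigma> where "\<sigma> x = integral {0..x} s" for x
  have "continuous_on {0..1} \<sigma>"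
    unfolding \<sigma>_def by (rule indefinite_integral_continuous_1[OF s])
  moreover have "strict_mono_on {0..1} \<sigma>"
    unfolding \<sigma>_def by (rule strict_mono_on_indefinite_integral[OF s nonneg \<open>negligible Z\<close> pos])
  ultimately obtain \<phi> where "continuous_on {\<sigma> 0..\<sigma> 1} \<phi>" "strict_mono_on {\<sigma> 0..\<sigma> 1} \<phi>"
    "\<And>x. x \<in> {0..1} \<Longrightarrow> \<phi> (\<sigma> x) = x"
    "\<And>y. y \<in> {\<sigma> 0..\<sigma> 1} \<Longrightarrow> \<phi> y \<in> {0..1} \<and> \<sigma> (\<phi> y) = y"
    using continuous_strict_mono_on_inverse_real by (metis zero_le_one)
  moreover have "\<sigma> 0 = 0" and "\<sigma> 1 = 1"
    using total by (simp_all add: \<sigma>_def)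
  ultimately show thesis
    using that[of \<phi>] unfolding \<sigma>_def by (metis atLeastAtMost_iff order_refl zero_le_one)
qed

lemma absolutely_integrable_spike_subset:
  fixes f :: "'a::euclidean_space \<Rightarrow> 'b::euclidean_space"
  assumes "T \<subseteq> S" and "negligible (S - T)"
  shows "f absolutely_integrable_on T \<longleftrightarrow> f absolutely_integrable_on S"
    and "integral T f = integral S f"
proof -
  have "{x \<in> T - S. f x \<noteq> 0} = {}"
    using \<open>T \<subseteq> S\<close> by blast
  then have "negligible {x \<in> T - S. f x \<noteq> 0}"
    by (metis negligible_empty)
  moreover have "negligible {x \<in> S - T. f x \<noteq> 0}"
    by (rule negligible_subset[OF \<open>negligible (S - T)\<close>]) auto
  ultimately show "f absolutely_integrable_on T \<longleftrightarrow> f absolutely_integrable_on S"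
    and "integral T f = integral S f"
    by (rule absolutely_integrable_spike_set_eq, rule integral_spike_set)+
qed

lemma absolutely_integrable_if_square_integrable:
  fixes f :: "'a::euclidean_space \<Rightarrow> 'b::euclidean_space"
  assumes "S \<in> lmeasurable" and f: "f integrable_on S"
    and "(\<lambda>x. (norm (f x))\<^sup>2) integrable_on S"
  shows "f absolutely_integrable_on S"
proof (rule absolutely_integrable_integrable_bound[OF _ f])
  show "norm (f x) \<le> 1 + (norm (f x))\<^sup>2" for x
  proof -
    have "0 \<le> (norm (f x) - 1)\<^sup>2"
      by simp
    then have "2 * norm (f x) \<le> (norm (f x))\<^sup>2 + 1"
      by (simp add: power2_diff)
    then show ?thesis
      using norm_ge_zero[of "f x"] by linarith
  qed
  show "(\<lambda>x. 1 + (norm (f x))\<^sup>2) integrable_on S"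
    using assms(1,3) unfolding lmeasurable_iff_integrable_on by (rule integrable_add)
qed

lemma absolutely_integrable_divide_continuous:
  fixes f q :: "real \<Rightarrow> real"
  assumes f: "f absolutely_integrable_on S" and "compact S"
    and q: "continuous_on S q" and q_nonzero: "\<And>x. x \<in> S \<Longrightarrow> q x \<noteq> 0"
  shows "(\<lambda>x. f x / q x) absolutely_integrable_on S"
proof -
  have cont: "continuous_on S (\<lambda>x. inverse (q x))"
    using q q_nonzero by (intro continuous_intros) auto
  have "(\<lambda>x. inverse (q x) * f x) absolutely_integrable_on S"
  proof (rule absolutely_integrable_bounded_measurable_product_real[OF _ _ _ f])
    show "S \<in> sets lebesgue"
      using \<open>compact S\<close> by (simp add: compact_imp_closed)
    with cont show "(\<lambda>x. inverse (q x)) \<in> borel_measurable (lebesgue_on S)"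
      by (rule continuous_imp_measurable_on_sets_lebesgue)
    show "bounded ((\<lambda>x. inverse (q x)) ` S)"
      using compact_continuous_image[OF cont \<open>compact S\<close>] by (rule compact_imp_bounded)
  qed
  then show ?thesis
    by (simp add: divide_inverse mult.commute)
qed

lemma negligible_Icc_diff_if_measure_eq:
  fixes T :: "real set"
  assumes "T \<subseteq> {a..b}" and "T \<in> lmeasurable" and "measure lebesgue T = b - a"
  shows "negligible ({a..b} - T)"
proof (cases "a \<le> b")
  case True
  then have "measure lebesgue ({a..b} - T) = 0"
    using measurable_measure_Diff[of "{a..b}" lebesgue T] assms by simp
  then show ?thesis
    using \<open>T \<in> lmeasurable\<close> by (simp add: negligible_iff_measure fmeasurable_Diff)
qed simp

lemma has_absolute_integral_change_of_variables_ae: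
  fixes \<sigma> s :: "real \<Rightarrow> real" and f :: "real \<Rightarrow> 'b::euclidean_space"
  assumes "negligible N" and deriv: "\<And>x. x \<in> {a<..<b} - N \<Longrightarrow> (\<sigma> has_field_derivative s x) (at x)"
    and "inj_on \<sigma> {a..b}" and nonneg: "\<And>x. x \<in> {a..b} \<Longrightarrow> 0 \<le> s x"
    and fs: "(\<lambda>x. s x *\<^sub>R f (\<sigma> x)) absolutely_integrable_on {a..b}"
  shows "f absolutely_integrable_on \<sigma> ` ({a<..<b} - N)"
    and "integral (\<sigma> ` ({a<..<b} - N)) f = integral {a..b} (\<lambda>x. s x *\<^sub>R f (\<sigma> x))"
proof -
  define D where "D = {a<..<b} - N"
  have "D \<in> sets lebesgue"
    unfolding D_def by (simp add: sets.Diff negligible_imp_sets[OF \<open>negligible N\<close>])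
  have D_sub: "D \<subseteq> {a..b}"
    by (auto simp: D_def)
  have "negligible ({a..b} - D)"
    by (rule negligible_subset[of "N \<union> {a, b}"]) (auto simp: D_def \<open>negligible N\<close>)
  have abs_s: "\<bar>s x\<bar> *\<^sub>R f (\<sigma> x) = s x *\<^sub>R f (\<sigma> x)" if "x \<in> D" for x
    using nonneg that D_sub by auto
  have "(\<lambda>x. s x *\<^sub>R f (\<sigma> x)) absolutely_integrable_on D"
    and "integral D (\<lambda>x. s x *\<^sub>R f (\<sigma> x)) = integral {a..b} (\<lambda>x. s x *\<^sub>R f (\<sigma> x))"
    using fs
    by (simp_all add: absolutely_integrable_spike_subset[OF D_sub \<open>negligible ({a..b} - D)\<close>])
  moreover have "(\<lambda>x. \<bar>s x\<bar> *\<^sub>R f (\<sigma> x)) absolutely_integrable_on D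
      \<longleftrightarrow> (\<lambda>x. s x *\<^sub>R f (\<sigma> x)) absolutely_integrable_on D"
    by (rule absolutely_integrable_spike_eq[of "{}"]) (simp_all add: abs_s)
  moreover have "integral D (\<lambda>x. \<bar>s x\<bar> *\<^sub>R f (\<sigma> x)) = integral D (\<lambda>x. s x *\<^sub>R f (\<sigma> x))"
    by (rule integral_cong) (simp add: abs_s)
  moreover have deriv_D: "(\<sigma> has_field_derivative s x) (at x within D)" if "x \<in> D" for x
    using deriv that by (auto simp: D_def intro: has_field_derivative_at_within)
  moreover have "inj_on \<sigma> D"
    using \<open>inj_on \<sigma> {a..b}\<close> D_sub by (rule inj_on_subset)
  ultimately have "f absolutely_integrable_on \<sigma> ` D \<and>
      integral (\<sigma> ` D) f = integral {a..b} (\<lambda>x. s x *\<^sub>R f (\<sigma> x))"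
    by (intro has_absolute_integral_change_of_variables_real[OF \<open>D \<in> sets lebesgue\<close> deriv_D
          \<open>inj_on \<sigma> D\<close>, THEN iffD1] conjI) simp_all
  then show "f absolutely_integrable_on \<sigma> ` ({a<..<b} - N)"
    and "integral (\<sigma> ` ({a<..<b} - N)) f = integral {a..b} (\<lambda>x. s x *\<^sub>R f (\<sigma> x))"
    by (simp_all add: D_def)
qed

lemma has_absolute_integral_change_of_variables_indefinite_integral:
  fixes s :: "real \<Rightarrow> real" and f :: "real \<Rightarrow> 'b::euclidean_space"
  assumes s: "s integrable_on {a..b}" and nonneg: "\<And>x. x \<in> {a..b} \<Longrightarrow> 0 \<le> s x"
    and "negligible Z" and pos: "\<And>x. x \<in> {a..b} - Z \<Longrightarrow> 0 < s x"
    and fs: "(\<lambda>x. s x *\<^sub>R f (integral {a..x} s)) absolutely_integrable_on {a..b}"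
  shows "f absolutely_integrable_on {0..integral {a..b} s}"
    and "integral {0..integral {a..b} s} f = integral {a..b} (\<lambda>x. s x *\<^sub>R f (integral {a..x} s))"
proof -
  define \<sigma> where "\<sigma> x = integral {a..x} s" for x
  obtain N where "negligible N"
    and N: "\<And>x. x \<in> {a<..<b} - N \<Longrightarrow> (\<sigma> has_vector_derivative s x) (at x)"
    using indefinite_integral_has_vector_derivative_ae[OF s] unfolding \<sigma>_def by blast
  have mono: "strict_mono_on {a..b} \<sigma>"
    unfolding \<sigma>_def by (rule strict_mono_on_indefinite_integral[OF s nonneg \<open>negligible Z\<close> pos])
  note cov = has_absolute_integral_change_of_variables_ae[OF \<open>negligible N\<close>
      N[unfolded has_real_derivative_iff_has_vector_derivative[symmetric]]
      strict_mono_on_imp_inj_on[OF mono] nonneg]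
  have image_sub: "\<sigma> ` ({a<..<b} - N) \<subseteq> {0..\<sigma> b}"
    using strict_mono_on_leD[OF mono, of a] strict_mono_on_leD[OF mono, of _ b]
    by (auto simp: \<sigma>_def)
  have "s absolutely_integrable_on {a..b}"
    using nonnegative_absolutely_integrable_1[OF s nonneg] .
  \<comment> \<open>The case \<open>f = 1\<close>: the image of the points where \<open>\<sigma>\<close> is differentiable has full measure.\<close>
  then have "(\<lambda>_. 1::real) absolutely_integrable_on \<sigma> ` ({a<..<b} - N)"
    and "integral (\<sigma> ` ({a<..<b} - N)) (\<lambda>_. 1::real) = \<sigma> b"
    using cov[where f="\<lambda>_. 1::real"] by (simp_all add: \<sigma>_def)
  then have "negligible ({0..\<sigma> b} - \<sigma> ` ({a<..<b} - N))"
    by (intro negligible_Icc_diff_if_measure_eq image_sub)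
      (simp_all add: lmeasurable_iff_integrable_on lmeasure_integral absolutely_integrable_on_def)
  note full = absolutely_integrable_spike_subset[OF image_sub this]
  have "f absolutely_integrable_on {0..\<sigma> b}"
    and "integral {0..\<sigma> b} f = integral {a..b} (\<lambda>x. s x *\<^sub>R f (\<sigma> x))"
    using cov[where f=f] fs unfolding full \<sigma>_def by simp_all
  then show "f absolutely_integrable_on {0..integral {a..b} s}"
    and "integral {0..integral {a..b} s} f = integral {a..b} (\<lambda>x. s x *\<^sub>R f (integral {a..x} s))"
    unfolding \<sigma>_def .
qed

lemma has_absolute_integral_substitution_indefinite_integral:
  fixes s :: "real \<Rightarrow> real" and g w :: "real \<Rightarrow> 'b::euclidean_space"
  assumes s: "s integrable_on {0..1}" and nonneg: "\<And>r. r \<in> {0..1} \<Longrightarrow> 0 \<le> s r"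
    and "negligible Z" and pos: "\<And>r. r \<in> {0..1} - Z \<Longrightarrow> 0 < s r"
    and g: "g absolutely_integrable_on {0..1}"
    and sw: "\<And>r. r \<in> {0..1} \<Longrightarrow> s r *\<^sub>R w (integral {0..r} s) = g r"
    and "r \<in> {0..1}"
  shows "w absolutely_integrable_on {0..integral {0..r} s}"
    and "integral {0..integral {0..r} s} w = integral {0..r} g"
proof -
  have sub: "{0..r} \<subseteq> {0..1}"
    using \<open>r \<in> {0..1}\<close> by auto
  have nonneg_r: "0 \<le> s x" if "x \<in> {0..r}" for x
    using nonneg sub that by auto
  have pos_r: "0 < s x" if "x \<in> {0..r} - Z" for x
    using pos sub that by auto
  have "(\<lambda>x. s x *\<^sub>R w (integral {0..x} s)) absolutely_integrable_on {0..r}"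
    by (rule absolutely_integrable_spike[OF absolutely_integrable_on_subinterval[OF g sub]
          negligible_empty])
      (use sw sub in auto)
  note cov = has_absolute_integral_change_of_variables_indefinite_integral[OF
      integrable_on_subinterval[OF s sub] nonneg_r \<open>negligible Z\<close> pos_r this]
  have "integral {0..r} (\<lambda>x. s x *\<^sub>R w (integral {0..x} s)) = integral {0..r} g"
    using sw sub by (intro integral_cong) auto
  with cov show "w absolutely_integrable_on {0..integral {0..r} s}"
    and "integral {0..integral {0..r} s} w = integral {0..r} g"
    by simp_all
qed

lemma normalised_weighted_speed:
  fixes g :: "real \<Rightarrow> 'a::euclidean_space" and \<rho> :: "real \<Rightarrow> real"
  assumes g: "g absolutely_integrable_on {0..1}"
    and "negligible Z" and g_nonzero: "\<And>r. r \<in> {0..1} - Z \<Longrightarrow> g r \<noteq> 0"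
    and \<rho>: "continuous_on {0..1} \<rho>" and \<rho>_pos: "\<And>r. r \<in> {0..1} \<Longrightarrow> 0 < \<rho> r"
  obtains c where "0 < c" "(\<lambda>r. norm (g r) / (c * sqrt (\<rho> r))) integrable_on {0..1}"
    "integral {0..1} (\<lambda>r. norm (g r) / (c * sqrt (\<rho> r))) = 1"
proof -
  define h where "h r = norm (g r) / sqrt (\<rho> r)" for r
  have "(\<lambda>r. norm (g r)) absolutely_integrable_on {0..1}"
    using absolutely_integrable_norm[OF g] by (simp add: o_def)
  moreover have "sqrt (\<rho> r) \<noteq> 0" if "r \<in> {0..1}" for r
    using \<rho>_pos[OF that] by simp
  ultimately have "h absolutely_integrable_on {0..1}"
    unfolding h_def by (intro absolutely_integrable_divide_continuous continuous_intros \<rho>) auto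
  then have h: "h integrable_on {0..1}"
    by (rule set_lebesgue_integral_eq_integral(1))
  have "0 < integral {0..1} h"
  proof (rule integral_pos_if_pos_ae[OF h _ _ \<open>negligible Z\<close>])
    show "0 \<le> h r" if "r \<in> {0..1}" for r
      using \<rho>_pos[OF that] by (simp add: h_def)
    show "0 < h r" if "r \<in> {0..1} - Z" for r
      using \<rho>_pos[of r] g_nonzero[OF that] that by (simp add: h_def)
  qed simp
  moreover have "norm (g r) / (integral {0..1} h * sqrt (\<rho> r)) = h r / integral {0..1} h" for r
    by (simp add: h_def)
  ultimately show thesis
    using that[of "integral {0..1} h"] integrable_on_divide[OF h] by simp
qed

lemma constant_speed_reparametrisation:
  fixes g :: "real \<Rightarrow> 'a::euclidean_space" and \<rho> :: "real \<Rightarrow> real"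
  assumes g: "g absolutely_integrable_on {0..1}"
    and "negligible Z" and g_nonzero: "\<And>r. r \<in> {0..1} - Z \<Longrightarrow> g r \<noteq> 0"
    and \<rho>: "continuous_on {0..1} \<rho>" and \<rho>_pos: "\<And>r. r \<in> {0..1} \<Longrightarrow> 0 < \<rho> r"
  obtains \<phi> :: "real \<Rightarrow> real" and c :: real and w :: "real \<Rightarrow> 'a"
  where "continuous_on {0..1} \<phi>" "strict_mono_on {0..1} \<phi>" "\<phi> 0 = 0" "\<phi> 1 = 1"
    "\<And>t. t \<in> {0..1} \<Longrightarrow> \<phi> t \<in> {0..1}"
    "0 < c" "w integrable_on {0..1}" "(\<lambda>t. (norm (w t))\<^sup>2) integrable_on {0..1}"
    "\<And>t. t \<in> {0..1} \<Longrightarrow> integral {0..t} w = integral {0..\<phi> t} g"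
    "\<And>t. t \<in> {0..1} \<Longrightarrow> norm (w t) = c * sqrt (\<rho> (\<phi> t))"
proof -
  obtain c where "0 < c" and s_int: "(\<lambda>r. norm (g r) / (c * sqrt (\<rho> r))) integrable_on {0..1}"
    and s_total: "integral {0..1} (\<lambda>r. norm (g r) / (c * sqrt (\<rho> r))) = 1"
    using normalised_weighted_speed[OF g \<open>negligible Z\<close> g_nonzero \<rho> \<rho>_pos] by blast
  define s where "s r = norm (g r) / (c * sqrt (\<rho> r))" for r
  note s_int = s_int[folded s_def] and s_total = s_total[folded s_def]
  have s_nonneg: "0 \<le> s r" if "r \<in> {0..1}" for r
    using \<rho>_pos[OF that] \<open>0 < c\<close> by (simp add: s_def)
  have s_pos: "0 < s r" if "r \<in> {0..1} - Z" for r
    using \<rho>_pos[of r] g_nonzero[OF that] that \<open>0 < c\<close> by (simp add: s_def)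
  obtain \<phi> where \<phi>: "continuous_on {0..1} \<phi>" "strict_mono_on {0..1} \<phi>" "\<phi> 0 = 0" "\<phi> 1 = 1"
    and \<phi>_range: "\<And>t. t \<in> {0..1} \<Longrightarrow> \<phi> t \<in> {0..1} \<and> integral {0..\<phi> t} s = t"
    and \<phi>_inverse: "\<And>r. r \<in> {0..1} \<Longrightarrow> \<phi> (integral {0..r} s) = r"
    using indefinite_integral_inverse[OF s_int s_nonneg \<open>negligible Z\<close> s_pos s_total] by blast
  \<comment> \<open>Any unit vector will do where \<open>g\<close> vanishes; it keeps \<open>norm (w t)\<close> exact for every \<open>t\<close>.\<close>
  define e where "e r = (if g r = 0 then SOME b. b \<in> Basis else sgn (g r))" for r
  have norm_e: "norm (e r) = 1" for r
    by (simp add: e_def norm_sgn SOME_Basis)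
  have g_e: "norm (g r) *\<^sub>R e r = g r" for r
    by (simp add: e_def sgn_div_norm)
  define w where "w t = (c * sqrt (\<rho> (\<phi> t))) *\<^sub>R e (\<phi> t)" for t
  have sw: "s r *\<^sub>R w (integral {0..r} s) = g r" if "r \<in> {0..1}" for r
  proof -
    have "s r * (c * sqrt (\<rho> r)) = norm (g r)"
      using \<open>0 < c\<close> \<rho>_pos[OF that] by (simp add: s_def)
    then show ?thesis
      using g_e[of r] \<phi>_inverse[OF that] by (simp add: w_def)
  qed
  note substitution = has_absolute_integral_substitution_indefinite_integral[OF s_int s_nonneg
      \<open>negligible Z\<close> s_pos g sw]
  have range: "\<phi> t \<in> {0..1}" if "t \<in> {0..1}" for t
    using \<phi>_range[OF that] by simp
  have speed: "norm (w t) = c * sqrt (\<rho> (\<phi> t))" if "t \<in> {0..1}" for t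
    using norm_e \<open>0 < c\<close> \<rho>_pos[OF range[OF that]] by (simp add: w_def)
  have "continuous_on {0..1} (\<lambda>t. c\<^sup>2 * \<rho> (\<phi> t))"
    using range by (intro continuous_intros continuous_on_compose2[OF \<rho> \<phi>(1)]) auto
  then have "(\<lambda>t. (norm (w t))\<^sup>2) integrable_on {0..1}"
    by (rule integrable_eq[OF integrable_continuous_real])
      (use speed \<rho>_pos range in \<open>simp add: power_mult_distrib less_imp_le\<close>)
  moreover have "w integrable_on {0..1}"
    using substitution(1)[where r=1] \<phi>_range[of 1] \<phi>(4) set_lebesgue_integral_eq_integral(1) by simp
  moreover have "integral {0..t} w = integral {0..\<phi> t} g" if "t \<in> {0..1}" for t
    using substitution(2)[where r="\<phi> t"] range[OF that] \<phi>_range[OF that] by simp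
  ultimately show thesis
    using that[OF \<phi> range \<open>0 < c\<close>] speed by blast
qed

lemma Lfun_squared_eq_twice_Mfun_if_constant_speed:
  fixes V :: "'a::euclidean_space \<Rightarrow> real" and v :: "real \<Rightarrow> 'a"
  assumes "negligible N" and speed: "\<And>t. t \<in> {0..1} - N \<Longrightarrow> norm (dot v t) = c * sqrt (V (v t))"
    and "0 \<le> c" and V_nonneg: "\<And>t. t \<in> {0..1} \<Longrightarrow> 0 \<le> V (v t)"
  shows "(Lfun V v)\<^sup>2 = 2 * Mfun V v"
proof -
  have "Lfun V v = integral {0..1} (\<lambda>t. c * V (v t))"
    unfolding Lfun_def
  proof (rule integral_spike[OF \<open>negligible N\<close>])
    fix t assume "t \<in> {0..1} - N"
    with speed V_nonneg show "c * V (v t) = norm (dot v t) * sqrt (V (v t))"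
      by (simp add: mult.assoc)
  qed
  moreover have "integral {0..1} (\<lambda>t. (norm (dot v t))\<^sup>2)
      = integral {0..1} (\<lambda>t. c\<^sup>2 * V (v t))"
  proof (rule integral_spike[OF \<open>negligible N\<close>])
    fix t assume "t \<in> {0..1} - N"
    with speed V_nonneg show "c\<^sup>2 * V (v t) = (norm (dot v t))\<^sup>2"
      by (simp add: power_mult_distrib)
  qed
  ultimately show ?thesis
    by (simp add: Mfun_def power2_eq_square)
qed

lemma admissibleE:
  fixes u :: "real \<Rightarrow> 'a::euclidean_space"
  assumes "admissible \<Omega> p0 p1 u"
  obtains g N where "g absolutely_integrable_on {0..1}"
    "\<And>t. t \<in> {0..1} \<Longrightarrow> u t = p0 + integral {0..t} g"
    "negligible N" "\<And>t. t \<in> {0..1} - N \<Longrightarrow> dot u t = g t"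
    "continuous_on {0..1} u" "\<And>t. t \<in> {0..1} \<Longrightarrow> u t \<in> \<Omega>" "u 1 = p1"
proof -
  obtain g where g: "g integrable_on {0..1}"
    and g_sq: "(\<lambda>t. (norm (g t))\<^sup>2) integrable_on {0..1}"
    and u_eq: "\<And>t. t \<in> {0..1} \<Longrightarrow> u t = p0 + integral {0..t} g"
    and u_\<Omega>: "\<And>t. t \<in> {0..1} \<Longrightarrow> u t \<in> \<Omega>" and u1: "u 1 = p1"
    using assms unfolding admissible_def H1_path_def by metis
  have g_abs: "g absolutely_integrable_on {0..1}"
    by (rule absolutely_integrable_if_square_integrable[OF _ g g_sq]) simp
  obtain N where "negligible N" and dot_u: "\<And>t. t \<in> {0..1} - N \<Longrightarrow> dot u t = g t"
    using dot_eq_ae_if_indefinite_integral[OF g u_eq] by blast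
  have u_cont: "continuous_on {0..1} u"
  proof (rule continuous_on_eq)
    show "continuous_on {0..1} (\<lambda>t. p0 + integral {0..t} g)"
      by (intro continuous_intros indefinite_integral_continuous_1[OF g])
  qed (use u_eq in auto)
  show thesis
    by (rule that[OF g_abs u_eq \<open>negligible N\<close> dot_u u_cont u_\<Omega> u1])
qed

lemma admissible_reparametrisation:
  fixes u :: "real \<Rightarrow> 'a::euclidean_space" and \<phi> :: "real \<Rightarrow> real"
  assumes u_eq: "\<And>t. t \<in> {0..1} \<Longrightarrow> u t = p0 + integral {0..t} g"
    and u_\<Omega>: "\<And>t. t \<in> {0..1} \<Longrightarrow> u t \<in> \<Omega>" and "u 1 = p1"
    and \<phi>: "continuous_on {0..1} \<phi>" "strict_mono_on {0..1} \<phi>" "\<phi> 0 = 0" "\<phi> 1 = 1"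
    and \<phi>_range: "\<And>t. t \<in> {0..1} \<Longrightarrow> \<phi> t \<in> {0..1}"
    and w: "w integrable_on {0..1}" and w_sq: "(\<lambda>t. (norm (w t))\<^sup>2) integrable_on {0..1}"
    and w_int: "\<And>t. t \<in> {0..1} \<Longrightarrow> integral {0..t} w = integral {0..\<phi> t} g"
  obtains N where "admissible \<Omega> p0 p1 (\<lambda>t. u (\<phi> t))" "reparam (\<lambda>t. u (\<phi> t)) u"
    "negligible N" "\<And>t. t \<in> {0..1} - N \<Longrightarrow> dot (\<lambda>t. u (\<phi> t)) t = w t"
proof -
  have v_eq: "u (\<phi> t) = p0 + integral {0..t} w" if "t \<in> {0..1}" for t
    using u_eq[OF \<phi>_range[OF that]] w_int[OF that] by simp
  from v_eq[of 0] have "u (\<phi> 0) = p0"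
    by simp
  have "admissible \<Omega> p0 p1 (\<lambda>t. u (\<phi> t))"
    unfolding admissible_def H1_path_def
  proof (intro conjI ballI exI[of _ w] w w_sq)
    show "u (\<phi> t) \<in> \<Omega>" if "t \<in> {0..1}" for t
      using u_\<Omega>[OF \<phi>_range[OF that]] .
    show "u (\<phi> t) = u (\<phi> 0) + integral {0..t} w" if "t \<in> {0..1}" for t
      using v_eq[OF that] \<open>u (\<phi> 0) = p0\<close> by simp
  qed (use \<open>u (\<phi> 0) = p0\<close> \<phi>(4) \<open>u 1 = p1\<close> in simp_all)
  moreover have "reparam (\<lambda>t. u (\<phi> t)) u"
    unfolding reparam_def using \<phi> by auto
  moreover obtain N where "negligible N" and "\<And>t. t \<in> {0..1} - N \<Longrightarrow> dot (\<lambda>t. u (\<phi> t)) t = w t"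
    using dot_eq_ae_if_indefinite_integral[OF w v_eq] by blast
  ultimately show thesis
    using that by blast
qed

lemma admissible_constant_speed_reparametrisation:
  fixes u :: "real \<Rightarrow> 'a::euclidean_space" and V :: "'a \<Rightarrow> real"
  assumes V: "continuous_on \<Omega> V" and V_pos: "\<And>x. x \<in> \<Omega> \<Longrightarrow> 0 < V x"
    and u: "admissible \<Omega> p0 p1 u"
    and "negligible Z" and dot_u_nonzero: "\<And>t. t \<in> {0..1} - Z \<Longrightarrow> dot u t \<noteq> 0"
  obtains v c N where "admissible \<Omega> p0 p1 v" "reparam v u" "0 \<le> c" "negligible N"
    "\<And>t. t \<in> {0..1} - N \<Longrightarrow> norm (dot v t) = c * sqrt (V (v t))"
proof -
  obtain g Nu where g: "g absolutely_integrable_on {0..1}"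
    and u_eq: "\<And>t. t \<in> {0..1} \<Longrightarrow> u t = p0 + integral {0..t} g"
    and "negligible Nu" and dot_u: "\<And>t. t \<in> {0..1} - Nu \<Longrightarrow> dot u t = g t"
    and u_cont: "continuous_on {0..1} u" and u_\<Omega>: "\<And>t. t \<in> {0..1} \<Longrightarrow> u t \<in> \<Omega>"
    and u1: "u 1 = p1"
    by (fact admissibleE[OF u])
  have Z: "negligible (Nu \<union> Z)"
    using \<open>negligible Nu\<close> \<open>negligible Z\<close> by simp
  have g_nonzero: "g t \<noteq> 0" if "t \<in> {0..1} - (Nu \<union> Z)" for t
    using dot_u[of t] dot_u_nonzero[of t] that by auto
  have V_cont: "continuous_on {0..1} (\<lambda>t. V (u t))"
    by (rule continuous_on_compose2[OF V u_cont]) (use u_\<Omega> in auto)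
  have V_u_pos: "0 < V (u t)" if "t \<in> {0..1}" for t
    using V_pos[OF u_\<Omega>[OF that]] .
  show thesis
  proof (rule constant_speed_reparametrisation[OF g Z g_nonzero V_cont V_u_pos])
    fix \<phi> :: "real \<Rightarrow> real" and c :: real and w :: "real \<Rightarrow> 'a"
    assume \<phi>: "continuous_on {0..1} \<phi>" "strict_mono_on {0..1} \<phi>" "\<phi> 0 = 0" "\<phi> 1 = 1"
      and \<phi>_range: "\<And>t. t \<in> {0..1} \<Longrightarrow> \<phi> t \<in> {0..1}"
      and "0 < c" and w: "w integrable_on {0..1}" "(\<lambda>t. (norm (w t))\<^sup>2) integrable_on {0..1}"
      and w_int: "\<And>t. t \<in> {0..1} \<Longrightarrow> integral {0..t} w = integral {0..\<phi> t} g"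
      and w_norm: "\<And>t. t \<in> {0..1} \<Longrightarrow> norm (w t) = c * sqrt (V (u (\<phi> t)))"
    obtain N where "admissible \<Omega> p0 p1 (\<lambda>t. u (\<phi> t))" "reparam (\<lambda>t. u (\<phi> t)) u" "negligible N"
      and dot_v: "\<And>t. t \<in> {0..1} - N \<Longrightarrow> dot (\<lambda>t. u (\<phi> t)) t = w t"
      using admissible_reparametrisation[OF u_eq u_\<Omega> u1 \<phi> \<phi>_range w w_int] by blast
    moreover have "norm (dot (\<lambda>t. u (\<phi> t)) t) = c * sqrt (V (u (\<phi> t)))" if "t \<in> {0..1} - N" for t
      using dot_v[OF that] w_norm that by simp
    ultimately show thesis
      using that[of "\<lambda>t. u (\<phi> t)" c N] \<open>0 < c\<close> by simp
  qed
qed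

theorem lemmaA2:
  fixes \<Omega> :: "'a::euclidean_space set" and p0 p1 :: 'a
    and V :: "'a \<Rightarrow> real" and u :: "real \<Rightarrow> 'a"
  assumes "p0 \<in> \<Omega>" and "p1 \<in> \<Omega>"
    and "continuous_on \<Omega> V" and "\<forall>x\<in>\<Omega>. V x > 0"
    and "admissible \<Omega> p0 p1 u"
    and "AE t in lborel. t \<in> {0..1} \<longrightarrow> norm (dot u t) \<noteq> 0"
  shows "\<exists>v. admissible \<Omega> p0 p1 v \<and> reparam v u \<and> (Lfun V v)\<^sup>2 = 2 * Mfun V v"
proof -
  obtain Z where "negligible Z" and dot_nonzero: "\<And>t. t \<in> {0..1} - Z \<Longrightarrow> dot u t \<noteq> 0"
    using AE_completion[OF assms(6)] unfolding eventually_ae_filter_negligible by auto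
  have V_pos: "\<And>x. x \<in> \<Omega> \<Longrightarrow> 0 < V x"
    using assms(4) by blast
  show ?thesis
  proof (rule admissible_constant_speed_reparametrisation[OF assms(3) V_pos assms(5)
        \<open>negligible Z\<close> dot_nonzero])
    fix v c N
    assume v: "admissible \<Omega> p0 p1 v" and "reparam v u" and "0 \<le> c" and "negligible N"
      and speed: "\<And>t. t \<in> {0..1} - N \<Longrightarrow> norm (dot v t) = c * sqrt (V (v t))"
    have "0 \<le> V (v t)" if "t \<in> {0..1}" for t
      using v V_pos that unfolding admissible_def H1_path_def by (simp add: less_imp_le)
    with speed \<open>0 \<le> c\<close> have "(Lfun V v)\<^sup>2 = 2 * Mfun V v"
      by (rule Lfun_squared_eq_twice_Mfun_if_constant_speed[OF \<open>negligible N\<close>])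
    with v \<open>reparam v u\<close> show ?thesis
      by blast
  qed
qed

end
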